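(* Let $\widehat{\mathbf M}=(\hat{\mathbb X},\hat{\mathbb U},\mathbb Y,\hat x_0,\hat{\mathbf t},\hat h)$ and $\mathbf M=(\mathbb X,\mathbb U,\mathbb Y,x_0,\mathbf t,h)$ be gMDPs with $\widehat{\mathbf M}\preceq^\delta_0\mathbf M$ via relation $\mathcal R$, interface $\mathcal U_v$ and lifted kernel $\mathbb W_{\mathbf t}$, let $\psi$ be an scLTL formula with DFA $\mathcal A_\psi=(Q,q_0,\Sigma,F,\tau)$, and let $\mu:\hat{\mathbb X}\times Q\to\hat{\mathbb U}$ be a mapping. Let $V:\hat{\mathbb X}\times Q\to[0,1]$ and $V_{\|}:\hat{\mathbb X}\times\mathbb X\times Q\to[0,1]$ satisfy $V(\hat x,q)\le V_{\|}(\hat x,x,q)$ for all $(\hat x,x)\in\mathcal R$ and $q\in Q$. Then $$\mathbf T^\mu_\delta(V)(\hat x,q)\le\mathbf T^\mu(V_{\|})(\hat x,x,q)\qquad\forall(\hat x,x)\in\mathcal R,\ q\in Q,$$ where $\mathbf T^\mu_\delta$ is the $\delta$-robust operator with respect to $\widehat{\mathbf M}\otimes\mathcal A_\psi$ and $\mathbf T^\mu$ on the right is the Bellman operator with respect to $(\widehat{\mathbf M}\|_{\mathcal R}\mathbf M)\otimes\mathcal A_\psi$.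
   Context: A gMDP is $(\mathbb X,\mathbb U,\mathbb Y,x_0,\mathbf t,h)$ with Polish state/input spaces, output space $\mathbb Y$ with metric $\mathbf d_{\mathbb Y}$, initial state, stochastic kernel $\mathbf t(\cdot\mid x,u)$ and measurable output map $h$. $\widehat{\mathbf M}\preceq^\delta_\epsilon\mathbf M$ means there exist an interface $\mathcal U_v:\hat{\mathbb U}\times\hat{\mathbb X}\times\mathbb X\to\mathcal P(\mathbb U)$, a measurable relation $\mathcal R\subseteq\hat{\mathbb X}\times\mathbb X$ and a Borel kernel $\mathbb W_{\mathbf t}(\cdot\mid\hat u,\hat x,x)$ on $\hat{\mathbb X}\times\mathbb X$ with $(\hat x_0,x_0)\in\mathcal R$ and, for all $(\hat x,x)\in\mathcal R$: $\mathbf d_{\mathbb Y}(\hat h(\hat x),h(x))\le\epsilon$, and for all $\hat u$, $\mathbb W=\mathbb W_{\mathbf t}(\cdot\mid\hat u,\hat x,x)$ has marginals $\hat{\mathbf t}(\cdot\mid\hat x,\hat u)$ on $\hat{\mathbb X}$ and $\mathbf t(\cdot\mid x,\mathcal U_v(\hat u,\hat x,x))$ on $\mathbb X$, and $\mathbb W(\mathcal R)\ge1-\delta$. The coupling gMDP $\widehat{\mathbf M}\|_{\mathcal R}\mathbf M$ has state space $\hat{\mathbb X}\times\mathbb X$, input space $\hat{\mathbb U}$, initial state $(\hat x_0,x_0)$, kernel $\mathbb W_{\mathbf t}$ and output map $(\hat x,x)\mapsto h(x)$. $\Sigma=2^{\mathsf{AP}}$, $\mathsf L:\mathbb Y\to\Sigma$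 measurable labelling, $\mathcal A_\psi$ a DFA (accepting set $F$, transition $\tau:Q\times\Sigma\to Q$) for $\psi$. For a gMDP $\mathbf N$ with state space $\mathbb Z$, kernel $\mathbf t_{\mathbf N}$ and output map $h_{\mathbf N}$, the product $\mathbf N\otimes\mathcal A_\psi$ has states $\mathbb Z\times Q$ and kernel $\bar{\mathbf t}(dz'\times\{q'\}\mid z,q,u)=\mathbf 1_{\{q'\}}(\tau(q,\mathsf L(h_{\mathbf N}(z'))))\mathbf t_{\mathbf N}(dz'\mid z,u)$; its Bellman operator for an input map $\mu$ is $\mathbf T^\mu(V)(z,q)=\int\max\{\mathbf 1_F(q'),V(z',q')\}\bar{\mathbf t}(dz'\times\{q'\}\mid z,q,\mu)$ (on the coupling, the input $\mu(\hat x,q)$ depends only on the $\hat{\mathbb X}$-component). The $\delta$-robust operator is $\mathbf T^\mu_\delta(V)=\mathbf L(\mathbf T^\mu(V)-\delta)$ with $\mathbf L(r)=\min(1,\max(0,r))$. *)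

theory Defs
  imports "HOL-Probability.Probability"
begin

text \<open>A gMDP (X, U, Y, x0, t, h): states and inputs are Polish spaces (type class
  polish_space, with their Borel sigma-algebras), outputs live in a metric space.  The initial state is just an element.\<close>

definition gMDP :: "('x::polish_space \<Rightarrow> 'u::polish_space \<Rightarrow> 'x measure) \<Rightarrow> ('x \<Rightarrow> 'y::metric_space) \<Rightarrow> bool" where
  "gMDP t h \<longleftrightarrow>
     (\<lambda>(x, u). t x u) \<in> borel \<rightarrow>\<^sub>M prob_algebra borel \<and> h \<in> borel_measurable borel"

definition kernel_mix :: "('x \<Rightarrow> 'u \<Rightarrow> 'x measure) \<Rightarrow> 'x \<Rightarrow> 'u measure \<Rightarrow> 'x measure" where
  "kernel_mix t x \<nu> = \<nu> \<bind> (\<lambda>u. t x u)"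

definition approx_sim ::
  "real \<Rightarrow> real \<Rightarrow>
   ('xh::polish_space \<Rightarrow> 'uh::polish_space \<Rightarrow> 'xh measure) \<Rightarrow> ('xh \<Rightarrow> 'y::metric_space) \<Rightarrow> 'xh \<Rightarrow>
   ('x::polish_space \<Rightarrow> 'u::polish_space \<Rightarrow> 'x measure) \<Rightarrow> ('x \<Rightarrow> 'y) \<Rightarrow> 'x \<Rightarrow>
   ('uh \<Rightarrow> 'xh \<Rightarrow> 'x \<Rightarrow> 'u measure) \<Rightarrow> ('xh \<times> 'x) set \<Rightarrow>
   ('uh \<Rightarrow> 'xh \<Rightarrow> 'x \<Rightarrow> ('xh \<times> 'x) measure) \<Rightarrow> bool" where
  "approx_sim \<delta> \<epsilon> th hh xh0 t h x0 Uv R W \<longleftrightarrow>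
     R \<in> sets (borel \<Otimes>\<^sub>M borel) \<and>
     (\<lambda>(uh, xh, x). W uh xh x) \<in> borel \<rightarrow>\<^sub>M prob_algebra (borel \<Otimes>\<^sub>M borel) \<and>
     (\<forall>uh xh x. Uv uh xh x \<in> space (prob_algebra borel)) \<and>
     (xh0, x0) \<in> R \<and>
     (\<forall>xh x. (xh, x) \<in> R \<longrightarrow>
        dist (hh xh) (h x) \<le> \<epsilon> \<and>
        (\<forall>uh. distr (W uh xh x) borel fst = th xh uh \<and>
              distr (W uh xh x) borel snd = kernel_mix t x (Uv uh xh x) \<and>
              measure (W uh xh x) R \<ge> 1 - \<delta>))"

text \<open>Z is the (Borel) measurable state space of N. Product N \<otimes> A_psi: kernel on Z \<times> Q,
  bar_t(dz' \<times> {q'} | z, q, u) = 1_{q'}(tau(q, L(h_N z'))) t_N(dz' | z, u).\<close>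
definition prod_kernel ::
  "'z measure \<Rightarrow> ('z \<Rightarrow> 'u \<Rightarrow> 'z measure) \<Rightarrow> ('z \<Rightarrow> 'y) \<Rightarrow> ('y \<Rightarrow> 'ap set) \<Rightarrow> ('q \<Rightarrow> 'ap set \<Rightarrow> 'q) \<Rightarrow>
   'z \<Rightarrow> 'q \<Rightarrow> 'u \<Rightarrow> ('z \<times> 'q) measure" where
  "prod_kernel Z tN hN L \<tau> z q u =
     distr (tN z u) (Z \<Otimes>\<^sub>M count_space UNIV) (\<lambda>z'. (z', \<tau> q (L (hN z'))))"

definition bellman ::
  "'z measure \<Rightarrow> ('z \<Rightarrow> 'u \<Rightarrow> 'z measure) \<Rightarrow> ('z \<Rightarrow> 'y) \<Rightarrow> ('y \<Rightarrow> 'ap set) \<Rightarrow> ('q \<Rightarrow> 'ap set \<Rightarrow> 'q) \<Rightarrow> 'q set \<Rightarrow>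
   ('z \<Rightarrow> 'q \<Rightarrow> 'u) \<Rightarrow> ('z \<Rightarrow> 'q \<Rightarrow> real) \<Rightarrow> 'z \<Rightarrow> 'q \<Rightarrow> real" where
  "bellman Z tN hN L \<tau> F \<mu> V z q =
     (\<integral>(z', q'). max (indicator F q') (V z' q') \<partial>(prod_kernel Z tN hN L \<tau> z q (\<mu> z q)))"

definition clip01 :: "real \<Rightarrow> real" where
  "clip01 r = min 1 (max 0 r)"

definition robust_bellman ::
  "real \<Rightarrow> 'z measure \<Rightarrow> ('z \<Rightarrow> 'u \<Rightarrow> 'z measure) \<Rightarrow> ('z \<Rightarrow> 'y) \<Rightarrow> ('y \<Rightarrow> 'ap set) \<Rightarrow> ('q \<Rightarrow> 'ap set \<Rightarrow> 'q) \<Rightarrow> 'q set \<Rightarrow>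
   ('z \<Rightarrow> 'q \<Rightarrow> 'u) \<Rightarrow> ('z \<Rightarrow> 'q \<Rightarrow> real) \<Rightarrow> 'z \<Rightarrow> 'q \<Rightarrow> real" where
  "robust_bellman \<delta> Z tN hN L \<tau> F \<mu> V z q = clip01 (bellman Z tN hN L \<tau> F \<mu> V z q - \<delta>)"

definition coupling_kernel ::
  "('uh \<Rightarrow> 'xh \<Rightarrow> 'x \<Rightarrow> ('xh \<times> 'x) measure) \<Rightarrow> ('xh \<times> 'x) \<Rightarrow> 'uh \<Rightarrow> ('xh \<times> 'x) measure" where
  "coupling_kernel W = (\<lambda>(xh, x) uh. W uh xh x)"

definition coupling_output :: "('x \<Rightarrow> 'y) \<Rightarrow> ('xh \<times> 'x) \<Rightarrow> 'y" where
  "coupling_output h = (\<lambda>(xh, x). h x)"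

end

theory Submission
  imports Defs
begin

text \<open>Both Bellman operators are integrals against the same lifted kernel: the abstract one
  because the first marginal of W is the abstract kernel, the coupled one by construction.
  With precision 0 the outputs, hence the automaton moves, agree on R, so the integrands
  are ordered on R; off R their difference is at most 1, and R has mass at least 1 - \<delta>.\<close>

definition reach_payoff :: "'q set \<Rightarrow> ('z \<Rightarrow> 'q \<Rightarrow> real) \<Rightarrow> 'z \<times> 'q \<Rightarrow> real" where
  "reach_payoff F V = (\<lambda>(z, q). max (indicator F q) (V z q))"

lemma reach_payoff_measurable:
  assumes "(\<lambda>(z, q). V z q) \<in> borel_measurable (Z \<Otimes>\<^sub>M count_space UNIV)"
  shows "reach_payoff F V \<in> borel_measurable (Z \<Otimes>\<^sub>M count_space UNIV)"
proof -
  have "(\<lambda>p. indicator F (snd p) :: real) \<in> borel_measurable (Z \<Otimes>\<^sub>M count_space UNIV)"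
    by (rule measurable_compose[OF measurable_snd]) simp
  then show ?thesis
    unfolding reach_payoff_def using assms by measurable
qed

lemma reach_payoff_range:
  assumes "V z q \<in> {0..1}"
  shows "reach_payoff F V (z, q) \<in> {0..1}"
  using assms by (simp add: reach_payoff_def indicator_def)

lemma reach_payoff_mono:
  assumes "V z q \<le> V' z' q"
  shows "reach_payoff F V (z, q) \<le> reach_payoff F V' (z', q)"
  using assms by (simp add: reach_payoff_def)

lemma bellman_eq_integral:
  assumes "sets (tN z (\<mu> z q)) = sets Z"
    and "(\<lambda>z'. L (hN z')) \<in> Z \<rightarrow>\<^sub>M count_space UNIV"
    and "(\<lambda>(z', q'). V z' q') \<in> borel_measurable (Z \<Otimes>\<^sub>M count_space UNIV)"
  shows "bellman Z tN hN L \<tau> F \<mu> V z q =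
    (\<integral>z'. reach_payoff F V (z', \<tau> q (L (hN z'))) \<partial>tN z (\<mu> z q))"
proof -
  have "(\<lambda>z'. \<tau> q (L (hN z'))) \<in> Z \<rightarrow>\<^sub>M count_space UNIV"
    using measurable_compose[OF assms(2) measurable_count_space] .
  then have "(\<lambda>z'. (z', \<tau> q (L (hN z')))) \<in> tN z (\<mu> z q) \<rightarrow>\<^sub>M Z \<Otimes>\<^sub>M count_space UNIV"
    unfolding measurable_cong_sets[OF assms(1) refl] by measurable
  then show ?thesis
    unfolding bellman_def prod_kernel_def
    by (simp add: integral_distr reach_payoff_measurable[OF assms(3)] reach_payoff_def[symmetric])
qed

lemma bellman_coupling_eq_integral:
  assumes "sets (W (\<mu> xh q) xh x) = sets (M1 \<Otimes>\<^sub>M M2)"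
    and "(\<lambda>z. L (h z)) \<in> M2 \<rightarrow>\<^sub>M count_space UNIV"
    and "(\<lambda>(z, q). V z q) \<in> borel_measurable ((M1 \<Otimes>\<^sub>M M2) \<Otimes>\<^sub>M count_space UNIV)"
  shows "bellman (M1 \<Otimes>\<^sub>M M2) (coupling_kernel W) (coupling_output h) L \<tau> F
      (\<lambda>(xh', x') q'. \<mu> xh' q') V (xh, x) q =
    (\<integral>p. reach_payoff F V (p, \<tau> q (L (h (snd p)))) \<partial>W (\<mu> xh q) xh x)"
proof -
  have "(\<lambda>z. L (coupling_output h z)) \<in> M1 \<Otimes>\<^sub>M M2 \<rightarrow>\<^sub>M count_space UNIV"
    unfolding coupling_output_def split_beta using assms(2) by measurable
  with assms(1,3) show ?thesis
    by (subst bellman_eq_integral) (simp_all add: coupling_kernel_def coupling_output_def split_beta')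
qed

lemma (in prob_space) integral_le_add_prob_compl:
  assumes "integrable M f" "integrable M g" "R \<in> events"
    and "\<And>x. x \<in> R \<Longrightarrow> f x \<le> g x"
    and "\<And>x. x \<in> space M \<Longrightarrow> f x \<le> g x + 1"
  shows "(\<integral>x. f x \<partial>M) \<le> (\<integral>x. g x \<partial>M) + (1 - prob R)"
proof -
  have compl: "integrable M (indicator (space M - R) :: _ \<Rightarrow> real)"
    using assms(3) by (intro integrable_real_indicator) (auto simp: less_top[symmetric])
  have "(\<integral>x. f x \<partial>M) \<le> (\<integral>x. g x + indicator (space M - R) x \<partial>M)"
  proof (rule integral_mono)
    show "integrable M (\<lambda>x. g x + indicator (space M - R) x)"
      using assms(2) compl by (rule Bochner_Integration.integrable_add)
    show "f x \<le> g x + indicator (space M - R) x" if "x \<in> space M" for x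
      using assms(4,5) that by (cases "x \<in> R") auto
  qed (fact assms(1))
  also have "\<dots> = (\<integral>x. g x \<partial>M) + prob (space M - R)"
    using assms(2) compl by (simp add: Int_absorb2)
  also have "prob (space M - R) = 1 - prob R"
    using prob_compl[OF assms(3)] .
  finally show ?thesis .
qed

lemma coupling_integral_fst_le:
  assumes "prob_space W" "sets W = sets (M1 \<Otimes>\<^sub>M M2)" "R \<in> sets (M1 \<Otimes>\<^sub>M M2)"
    and "f \<in> borel_measurable M1" "g \<in> borel_measurable (M1 \<Otimes>\<^sub>M M2)"
    and "\<And>a. f a \<in> {0..1}" "\<And>p. g p \<in> {0..1}"
    and "\<And>a b. (a, b) \<in> R \<Longrightarrow> f a \<le> g (a, b)"
  shows "(\<integral>a. f a \<partial>distr W M1 fst) \<le> (\<integral>p. g p \<partial>W) + (1 - measure W R)"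
proof -
  interpret prob_space W by (fact assms(1))
  have measurable_W: "measurable W N = measurable (M1 \<Otimes>\<^sub>M M2) N" for N
    by (rule measurable_cong_sets[OF assms(2) refl])
  have f_fst: "(\<lambda>p. f (fst p)) \<in> borel_measurable W"
    unfolding measurable_W using measurable_fst assms(4) by (rule measurable_compose)
  have g: "g \<in> borel_measurable W"
    unfolding measurable_W by (fact assms(5))
  have "(\<integral>a. f a \<partial>distr W M1 fst) = (\<integral>p. f (fst p) \<partial>W)"
    by (rule integral_distr) (simp_all add: measurable_W assms(4))
  also have "\<dots> \<le> (\<integral>p. g p \<partial>W) + (1 - measure W R)"
  proof (rule integral_le_add_prob_compl)
    show "integrable W (\<lambda>p. f (fst p))"
      using f_fst assms(6) by (intro integrable_const_bound[where B = 1] AE_I2) auto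
    show "integrable W g"
      using g assms(7) by (intro integrable_const_bound[where B = 1] AE_I2) auto
    show "R \<in> events"
      using assms(2,3) by simp
    show "f (fst p) \<le> g p" if "p \<in> R" for p
      using assms(8)[of "fst p" "snd p"] that by simp
    show "f (fst p) \<le> g p + 1" for p
      using assms(6)[of "fst p"] assms(7)[of p] by simp
  qed
  finally show ?thesis .
qed

lemma reach_payoff_integral_coupling_le:
  assumes "prob_space W" "sets W = sets (M1 \<Otimes>\<^sub>M M2)" "R \<in> sets (M1 \<Otimes>\<^sub>M M2)"
    and "sh \<in> M1 \<rightarrow>\<^sub>M count_space UNIV" "s \<in> M2 \<rightarrow>\<^sub>M count_space UNIV"
    and "(\<lambda>(z, q). V z q) \<in> borel_measurable (M1 \<Otimes>\<^sub>M count_space UNIV)"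
    and "(\<lambda>(p, q). Vc p q) \<in> borel_measurable ((M1 \<Otimes>\<^sub>M M2) \<Otimes>\<^sub>M count_space UNIV)"
    and "\<And>z q. V z q \<in> {0..1}" "\<And>p q. Vc p q \<in> {0..1}"
    and "\<And>a b. (a, b) \<in> R \<Longrightarrow> sh a = s b"
    and "\<And>a b q. (a, b) \<in> R \<Longrightarrow> V a q \<le> Vc (a, b) q"
  shows "(\<integral>z. reach_payoff F V (z, sh z) \<partial>distr W M1 fst)
    \<le> (\<integral>p. reach_payoff F Vc (p, s (snd p)) \<partial>W) + (1 - measure W R)"
proof (rule coupling_integral_fst_le[OF assms(1-3)])
  show "(\<lambda>z. reach_payoff F V (z, sh z)) \<in> borel_measurable M1"
    using reach_payoff_measurable[OF assms(6)] assms(4) by measurable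
  show "(\<lambda>p. reach_payoff F Vc (p, s (snd p))) \<in> borel_measurable (M1 \<Otimes>\<^sub>M M2)"
    using reach_payoff_measurable[OF assms(7)] assms(5) by measurable
  show "reach_payoff F V (z, sh z) \<in> {0..1}" for z
    using assms(8) by (rule reach_payoff_range)
  show "reach_payoff F Vc (p, s (snd p)) \<in> {0..1}" for p
    using assms(9) by (rule reach_payoff_range)
  show "reach_payoff F V (a, sh a) \<le> reach_payoff F Vc ((a, b), s (snd (a, b)))"
    if "(a, b) \<in> R" for a b
    using assms(10,11)[OF that] by (simp add: reach_payoff_mono)
qed

lemma gMDP_kernel_sets:
  assumes "gMDP t h"
  shows "sets (t x u) = sets borel"
proof -
  have "(\<lambda>(x, u). t x u) \<in> borel \<rightarrow>\<^sub>M prob_algebra borel"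
    using assms unfolding gMDP_def by blast
  from measurable_space[OF this, of "(x, u)"] show ?thesis
    by (simp add: space_prob_algebra)
qed

lemma approx_sim_lifted_kernel:
  assumes "approx_sim \<delta> \<epsilon> th hh xh0 t h x0 Uv R W"
  shows "prob_space (W uh xh x)" and "sets (W uh xh x) = sets (borel \<Otimes>\<^sub>M borel)"
proof -
  have "(\<lambda>(uh, xh, x). W uh xh x) \<in> borel \<rightarrow>\<^sub>M prob_algebra (borel \<Otimes>\<^sub>M borel)"
    using assms unfolding approx_sim_def by blast
  from measurable_space[OF this, of "(uh, xh, x)"]
  show "prob_space (W uh xh x)" "sets (W uh xh x) = sets (borel \<Otimes>\<^sub>M borel)"
    by (auto simp: space_prob_algebra)
qed

lemma bellman_nonneg: "0 \<le> bellman Z tN hN L \<tau> F \<mu> V z q"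
  unfolding bellman_def by (rule integral_nonneg_AE) (auto simp: max.coboundedI1)

lemma robust_bellman_le:
  assumes "bellman Z tN hN L \<tau> F \<mu> V z q - \<delta> \<le> b" "0 \<le> b"
  shows "robust_bellman \<delta> Z tN hN L \<tau> F \<mu> V z q \<le> b"
  using assms unfolding robust_bellman_def clip01_def by linarith

theorem lemma2:
  fixes th :: "'xh::polish_space \<Rightarrow> 'uh::polish_space \<Rightarrow> 'xh measure"
    and hh :: "'xh \<Rightarrow> 'y::metric_space" and xh0 :: 'xh
    and t :: "'x::polish_space \<Rightarrow> 'u::polish_space \<Rightarrow> 'x measure"
    and h :: "'x \<Rightarrow> 'y" and x0 :: 'x
    and Uv :: "'uh \<Rightarrow> 'xh \<Rightarrow> 'x \<Rightarrow> 'u measure"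
    and R :: "('xh \<times> 'x) set"
    and W :: "'uh \<Rightarrow> 'xh \<Rightarrow> 'x \<Rightarrow> ('xh \<times> 'x) measure"
    and L :: "'y \<Rightarrow> 'ap::finite set"
    and \<tau> :: "'q::finite \<Rightarrow> 'ap set \<Rightarrow> 'q" and q0 :: 'q and F :: "'q set"
    and \<mu> :: "'xh \<Rightarrow> 'q \<Rightarrow> 'uh"
    and V :: "'xh \<Rightarrow> 'q \<Rightarrow> real"
    and Vp :: "'xh \<Rightarrow> 'x \<Rightarrow> 'q \<Rightarrow> real"
    and \<delta> :: real
  assumes Mhat: "gMDP th hh"
    and M: "gMDP t h"
    and sim: "approx_sim \<delta> 0 th hh xh0 t h x0 Uv R W"
    and L_meas: "L \<in> borel \<rightarrow>\<^sub>M count_space UNIV"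
    and V_range: "\<And>xh q. V xh q \<in> {0..1}"
    and Vp_range: "\<And>xh x q. Vp xh x q \<in> {0..1}"
    and V_meas: "(\<lambda>(xh, q). V xh q) \<in> borel_measurable (borel \<Otimes>\<^sub>M count_space UNIV)"
    and Vp_meas: "(\<lambda>((xh, x), q). Vp xh x q) \<in> borel_measurable ((borel \<Otimes>\<^sub>M borel) \<Otimes>\<^sub>M count_space UNIV)"
    and V_le: "\<And>xh x q. (xh, x) \<in> R \<Longrightarrow> V xh q \<le> Vp xh x q"
  shows "\<forall>xh x q. (xh, x) \<in> R \<longrightarrow>
           robust_bellman \<delta> borel th hh L \<tau> F \<mu> V xh q
             \<le> bellman (borel \<Otimes>\<^sub>M borel) (coupling_kernel W) (coupling_output h) L \<tau> F
                  (\<lambda>(xh', x') q'. \<mu> xh' q') (\<lambda>(xh', x'). Vp xh' x') (xh, x) q"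
proof (intro allI impI)
  fix xh x q
  assume "(xh, x) \<in> R"
  let ?Vc = "\<lambda>(xh', x'). Vp xh' x'"
  let ?coupled = "bellman (borel \<Otimes>\<^sub>M borel) (coupling_kernel W) (coupling_output h) L \<tau> F
      (\<lambda>(xh', x') q'. \<mu> xh' q') ?Vc (xh, x) q"
  define Wm where "Wm = W (\<mu> xh q) xh x"
  from sim \<open>(xh, x) \<in> R\<close> have R_sets: "R \<in> sets (borel \<Otimes>\<^sub>M borel)"
    and marginal: "distr Wm borel fst = th xh (\<mu> xh q)"
    and mass: "1 - \<delta> \<le> measure Wm R"
    and same_output: "\<And>a b. (a, b) \<in> R \<Longrightarrow> hh a = h b"
    unfolding approx_sim_def Wm_def by auto
  have Wm: "prob_space Wm" "sets Wm = sets (borel \<Otimes>\<^sub>M borel)"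
    unfolding Wm_def using approx_sim_lifted_kernel[OF sim] by blast+
  have "hh \<in> borel_measurable borel" "h \<in> borel_measurable borel"
    using Mhat M by (simp_all add: gMDP_def)
  then have hh_L: "(\<lambda>z. L (hh z)) \<in> borel \<rightarrow>\<^sub>M count_space UNIV"
    and h_L: "(\<lambda>z. L (h z)) \<in> borel \<rightarrow>\<^sub>M count_space UNIV"
    and succ_hat: "(\<lambda>z. \<tau> q (L (hh z))) \<in> borel \<rightarrow>\<^sub>M count_space UNIV"
    and succ: "(\<lambda>z. \<tau> q (L (h z))) \<in> borel \<rightarrow>\<^sub>M count_space UNIV"
    using L_meas by measurable
  have Vc_meas: "(\<lambda>(p, q). ?Vc p q) \<in> borel_measurable ((borel \<Otimes>\<^sub>M borel) \<Otimes>\<^sub>M count_space UNIV)"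
    using Vp_meas by (simp add: split_beta')
  have "bellman borel th hh L \<tau> F \<mu> V xh q =
      (\<integral>z. reach_payoff F V (z, \<tau> q (L (hh z))) \<partial>distr Wm borel fst)"
    unfolding marginal using gMDP_kernel_sets[OF Mhat] hh_L V_meas by (rule bellman_eq_integral)
  also have "\<dots> \<le> (\<integral>p. reach_payoff F ?Vc (p, \<tau> q (L (h (snd p)))) \<partial>Wm) + (1 - measure Wm R)"
    by (rule reach_payoff_integral_coupling_le[OF Wm R_sets succ_hat succ V_meas Vc_meas])
      (use V_range Vp_range in \<open>auto simp: same_output V_le split_beta\<close>)
  also have "\<dots> = ?coupled + (1 - measure Wm R)"
    using Wm(2) h_L Vc_meas unfolding Wm_def by (simp add: bellman_coupling_eq_integral)
  finally have "bellman borel th hh L \<tau> F \<mu> V xh q - \<delta> \<le> ?coupled"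
    using mass by linarith
  then show "robust_bellman \<delta> borel th hh L \<tau> F \<mu> V xh q \<le> ?coupled"
    by (rule robust_bellman_le[OF _ bellman_nonneg])
qed

end
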